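(* Let $\beta\in(0,d]$, let $Q$ be a cube in $\mathbb{R}^d$ and $f \in L^1(Q;\mathcal{H}^{\beta,Q}_\infty)$. Then for every $\lambda>0$ such that $$\lambda \geq \frac{1}{l(Q)^\beta} \int_Q |f| \, d\mathcal{H}^{\beta,Q}_\infty,$$ there exists a countable collection of non-overlapping cubes $\{ Q_k\}\subset \mathcal{D}(Q)$, each contained in $Q$, such that (1) $\lambda< \frac{1}{l(Q_k)^\beta} \int_{Q_k} |f| \, d\mathcal{H}^{\beta,Q}_\infty \leq 2^\beta \lambda$ for every $k$; (2) $|f(x)| \leq \lambda$ for $\mathcal{H}^\beta$-a.e. $x\in Q \setminus \bigcup_k Q_k$.
   Context: For a cube $Q=a+[0,\ell)^d$ (cubes are half-open), $\mathcal{D}(Q)=\{a+2^{-j}\ell(m+[0,1)^d): j\in\mathbb{Z}, m\in\mathbb{Z}^d\}$. $\mathcal{H}^{\beta,Q}_{\infty}(E)= \inf \{\sum_{i} l(Q_i)^\beta : E \subset \bigcup_{i} Q_i,\ Q_i \in \mathcal{D}(Q) \}$, $l(\cdot)$ the side length. For $f\ge0$ and a set $A$, $\int_A f\,d\mathcal{H}^{\beta,Q}_\infty=\int_0^\infty \mathcal{H}^{\beta,Q}_\infty(\{x\in A:f(x)>t\})\,dt$. $f$ is $\mathcal{H}^{\beta,Q}_\infty$-quasicontinuous if for every $\epsilon>0$ there is an open $O$ with $\mathcal{H}^{\beta,Q}_\infty(O)<\epsilon$ and $f|_{O^c}$ continuous; $L^1(Q;\mathcal{H}^{\beta,Q}_\infty)$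 is the set of such $f$ with $\int_{Q}|f|\,d\mathcal{H}^{\beta,Q}_\infty<\infty$. $\mathcal{H}^\beta$ denotes the $\beta$-dimensional Hausdorff measure. *)

theory Defs
  imports "HOL-Analysis.Analysis"
begin

definition hcube :: "'a::euclidean_space \<Rightarrow> real \<Rightarrow> 'a set" where
  "hcube a l = {x. \<forall>i\<in>Basis. a \<bullet> i \<le> x \<bullet> i \<and> x \<bullet> i < a \<bullet> i + l}"

text \<open>Parameters (corner, side length) of the dyadic cubes D(Q) of the cube Q = hcube a l:
  a + 2^(-j) l (m + [0,1)^d), j integer, m in Z^d.\<close>
definition dyadic_params :: "'a::euclidean_space \<Rightarrow> real \<Rightarrow> ('a \<times> real) set" where
  "dyadic_params a l = {(b, s). \<exists>(j::int) (m::'a). (\<forall>i\<in>Basis. m \<bullet> i \<in> \<int>) \<and>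
      s = 2 powr (- real_of_int j) * l \<and> b = a + s *\<^sub>R m}"

text \<open>Dyadic Hausdorff content H^{beta,Q}_infty, Q = hcube a l.  A countable cover is a
  sequence of optional dyadic cubes (None = no cube, which allows finite covers).\<close>
definition dyadic_content :: "real \<Rightarrow> 'a::euclidean_space \<Rightarrow> real \<Rightarrow> 'a set \<Rightarrow> ennreal" where
  "dyadic_content \<beta> a l E =
     (INF c \<in> {c :: nat \<Rightarrow> ('a \<times> real) option.
                 (\<forall>n. c n = None \<or> the (c n) \<in> dyadic_params a l) \<and>
                 E \<subseteq> (\<Union>n\<in>{n. c n \<noteq> None}. hcube (fst (the (c n))) (snd (the (c n))))}.
        (\<Sum>n. (case c n of None \<Rightarrow> 0 | Some (b, s) \<Rightarrow> ennreal (s powr \<beta>))))"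

definition dyadic_choquet :: "real \<Rightarrow> 'a::euclidean_space \<Rightarrow> real \<Rightarrow> 'a set \<Rightarrow> ('a \<Rightarrow> real) \<Rightarrow> ennreal" where
  "dyadic_choquet \<beta> a l A f =
     (\<integral>\<^sup>+ t. indicator {0<..} t * dyadic_content \<beta> a l {x \<in> A. f x > t} \<partial>lborel)"

definition dyadic_quasicont :: "real \<Rightarrow> 'a::euclidean_space \<Rightarrow> real \<Rightarrow> ('a \<Rightarrow> real) \<Rightarrow> bool" where
  "dyadic_quasicont \<beta> a l f \<longleftrightarrow>
     (\<forall>\<epsilon>>0. \<exists>U. open U \<and> dyadic_content \<beta> a l U < ennreal \<epsilon> \<and> continuous_on (hcube a l - U) f)"

definition dyadic_L1 :: "real \<Rightarrow> 'a::euclidean_space \<Rightarrow> real \<Rightarrow> ('a \<Rightarrow> real) set" where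
  "dyadic_L1 \<beta> a l = {f. dyadic_quasicont \<beta> a l f \<and>
      dyadic_choquet \<beta> a l (hcube a l) (\<lambda>x. \<bar>f x\<bar>) < \<infinity>}"

text \<open>beta-dimensional Hausdorff (outer) measure (without normalising constant, which does
  not affect null sets): sup over delta>0 of inf of sum diam(C_n)^beta over countable covers
  by sets of diameter at most delta.\<close>
definition hausdorff_measure :: "real \<Rightarrow> 'a::euclidean_space set \<Rightarrow> ennreal" where
  "hausdorff_measure \<beta> E =
     (SUP \<delta> \<in> {0<..}. INF C \<in> {C :: nat \<Rightarrow> 'a set. E \<subseteq> (\<Union>n. C n) \<and> (\<forall>n. diameter (C n) \<le> \<delta>)}.
        (\<Sum>n. ennreal (if C n = {} then 0 else diameter (C n) powr \<beta>)))"

end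

theory Submission
  imports Defs
begin

text \<open>Calderon-Zygmund stopping time on the dyadic grid of \<open>Q\<close>: call a dyadic subcube of \<open>Q\<close>
  heavy if the \<open>\<beta>\<close>-average of \<open>|f|\<close> over it exceeds \<open>\<lambda>\<close>, and select the maximal heavy cubes.
  The hypothesis on \<open>Q\<close> makes every heavy cube a proper subcube, so its parent is not heavy,
  which gives the upper bound \<open>2\<^sup>\<beta> \<lambda>\<close>. Outside the selected cubes every dyadic average is at
  most \<open>\<lambda>\<close>, so the set where \<open>|f| > \<lambda> + \<delta>\<close> meets every dyadic cube \<open>R\<close> around one of its
  points in content at most \<open>\<lambda> / (\<lambda> + \<delta>) l(R)\<^sup>\<beta>\<close>. As the content is computed from dyadic
  covers, a set whose relative density stays below \<open>1\<close> at all small scales has content zero,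
  hence Hausdorff measure zero. This density argument replaces Lebesgue differentiation.\<close>

lemma ennreal_divide_le_iff:
  assumes "0 < s"
  shows "x / ennreal s \<le> y \<longleftrightarrow> x \<le> y * ennreal s"
proof
  assume "x / ennreal s \<le> y"
  then have "x / ennreal s * ennreal s \<le> y * ennreal s"
    by (rule mult_right_mono) simp
  then show "x \<le> y * ennreal s"
    using assms by (simp add: ennreal_divide_times)
next
  assume "x \<le> y * ennreal s"
  then show "x / ennreal s \<le> y"
    using assms by (intro divide_le_posI_ennreal) (simp_all add: mult.commute)
qed

subsection \<open>Dyadic cubes\<close>

definition integer_points :: "'a::euclidean_space set" where
  "integer_points = {m. \<forall>i\<in>Basis. m \<bullet> i \<in> \<int>}"

definition dyadic_side :: "real \<Rightarrow> int \<Rightarrow> real" where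
  "dyadic_side l j = 2 powr (- real_of_int j) * l"

definition dyadic_cube :: "'a::euclidean_space \<Rightarrow> real \<Rightarrow> int \<Rightarrow> 'a \<Rightarrow> 'a set" where
  "dyadic_cube a l j m = hcube (a + dyadic_side l j *\<^sub>R m) (dyadic_side l j)"

definition dyadic_index :: "'a::euclidean_space \<Rightarrow> real \<Rightarrow> int \<Rightarrow> 'a \<Rightarrow> 'a" where
  "dyadic_index a l j x = (\<Sum>i\<in>Basis. of_int \<lfloor>((x - a) \<bullet> i) / dyadic_side l j\<rfloor> *\<^sub>R i)"

lemma zero_in_integer_points [simp]: "0 \<in> integer_points"
  by (simp add: integer_points_def)

lemma countable_integer_points: "countable (integer_points :: 'a::euclidean_space set)"
proof (rule countable_image_inj_on)
  show "inj_on (\<lambda>m::'a. restrict (\<lambda>i. m \<bullet> i) Basis) integer_points"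
    by (rule inj_onI) (metis euclidean_eqI restrict_apply')
  have "(\<lambda>m::'a. restrict (\<lambda>i. m \<bullet> i) Basis) ` integer_points \<subseteq> Pi\<^sub>E Basis (\<lambda>_. \<int>)"
    by (auto simp: integer_points_def)
  moreover have "countable (Pi\<^sub>E (Basis::'a set) (\<lambda>_. \<int>))"
    by (rule countable_PiE) (auto simp: Ints_def)
  ultimately show "countable ((\<lambda>m::'a. restrict (\<lambda>i. m \<bullet> i) Basis) ` integer_points)"
    by (rule countable_subset)
qed

lemma dyadic_side_pos: "0 < l \<Longrightarrow> 0 < dyadic_side l j"
  by (simp add: dyadic_side_def)

lemma dyadic_side_0 [simp]: "dyadic_side l 0 = l"
  by (simp add: dyadic_side_def)

lemma dyadic_side_le_iff: "0 < l \<Longrightarrow> dyadic_side l j \<le> dyadic_side l j' \<longleftrightarrow> j' \<le> j"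
  by (simp add: dyadic_side_def)

lemma dyadic_side_diff_one: "dyadic_side l (j - 1) = 2 * dyadic_side l j"
  by (simp add: dyadic_side_def powr_diff powr_minus field_simps)

lemma dyadic_side_eq_mult_power:
  "j \<le> j' \<Longrightarrow> dyadic_side l j = dyadic_side l j' * real_of_int (2 ^ nat (j' - j))"
  by (simp add: dyadic_side_def powr_realpow[symmetric] powr_add[symmetric] algebra_simps)

lemma dyadic_params_dyadic_cube:
  "m \<in> integer_points \<Longrightarrow> (a + dyadic_side l j *\<^sub>R m, dyadic_side l j) \<in> dyadic_params a l"
  unfolding dyadic_params_def integer_points_def dyadic_side_def by blast

lemma dyadic_params_cases:
  assumes "(b, s) \<in> dyadic_params a l"
  obtains j m where "m \<in> integer_points" "s = dyadic_side l j" "b = a + dyadic_side l j *\<^sub>R m"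
  using assms unfolding dyadic_params_def integer_points_def dyadic_side_def by blast

lemma dyadic_index_inner:
  "i \<in> Basis \<Longrightarrow> dyadic_index a l j x \<bullet> i = of_int \<lfloor>((x - a) \<bullet> i) / dyadic_side l j\<rfloor>"
  by (simp add: dyadic_index_def)

lemma dyadic_index_in_integer_points [simp]: "dyadic_index a l j x \<in> integer_points"
  by (simp add: integer_points_def dyadic_index_inner)

lemma mem_dyadic_cube_iff:
  assumes l: "0 < l" and m: "m \<in> integer_points"
  shows "x \<in> dyadic_cube a l j m \<longleftrightarrow> m = dyadic_index a l j x"
proof -
  define s where "s = dyadic_side l j"
  have s: "0 < s" using l by (simp add: s_def dyadic_side_pos)
  have coord: "(a \<bullet> i + s * (m \<bullet> i) \<le> x \<bullet> i \<and> x \<bullet> i < a \<bullet> i + s * (m \<bullet> i) + s)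
      \<longleftrightarrow> m \<bullet> i = dyadic_index a l j x \<bullet> i" if i: "i \<in> Basis" for i
  proof -
    obtain z where z: "m \<bullet> i = of_int z"
      using m i unfolding integer_points_def by (auto elim: Ints_cases)
    have "(a \<bullet> i + s * (m \<bullet> i) \<le> x \<bullet> i \<and> x \<bullet> i < a \<bullet> i + s * (m \<bullet> i) + s)
        \<longleftrightarrow> (of_int z \<le> (x \<bullet> i - a \<bullet> i) / s \<and> (x \<bullet> i - a \<bullet> i) / s < of_int z + 1)"
      using s by (simp add: z field_simps)
    also have "\<dots> \<longleftrightarrow> \<lfloor>(x \<bullet> i - a \<bullet> i) / s\<rfloor> = z"
      by (simp add: floor_eq_iff)
    also have "\<dots> \<longleftrightarrow> m \<bullet> i = dyadic_index a l j x \<bullet> i"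
      using i by (auto simp: dyadic_index_inner z s_def inner_diff_left)
    finally show ?thesis .
  qed
  have "x \<in> dyadic_cube a l j m \<longleftrightarrow> (\<forall>i\<in>Basis. m \<bullet> i = dyadic_index a l j x \<bullet> i)"
    using coord by (simp add: dyadic_cube_def hcube_def s_def[symmetric] inner_add_left algebra_simps)
  also have "\<dots> \<longleftrightarrow> m = dyadic_index a l j x"
    by (metis euclidean_eqI)
  finally show ?thesis .
qed

lemma mem_dyadic_cube_index: "0 < l \<Longrightarrow> x \<in> dyadic_cube a l j (dyadic_index a l j x)"
  by (simp add: mem_dyadic_cube_iff)

lemma corner_mem_dyadic_cube: "0 < l \<Longrightarrow> a + dyadic_side l j *\<^sub>R m \<in> dyadic_cube a l j m"
  using dyadic_side_pos[of l j] by (auto simp: dyadic_cube_def hcube_def)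

lemma dyadic_cube_0_0 [simp]: "dyadic_cube a l 0 0 = hcube a l"
  by (simp add: dyadic_cube_def)

lemma dyadic_index_eq_coarser:
  assumes l: "0 < l" and jj: "j \<le> j'" and eq: "dyadic_index a l j' x = dyadic_index a l j' y"
  shows "dyadic_index a l j x = dyadic_index a l j y"
proof (rule euclidean_eqI)
  fix i :: 'a assume i: "i \<in> Basis"
  have floor_coarser: "\<lfloor>t / dyadic_side l j\<rfloor> = \<lfloor>t / dyadic_side l j'\<rfloor> div 2 ^ nat (j' - j)" for t
    using floor_divide_real_eq_div[of "2 ^ nat (j' - j)" "t / dyadic_side l j'"]
    by (simp add: dyadic_side_eq_mult_power[OF jj])
  have "\<lfloor>((x - a) \<bullet> i) / dyadic_side l j'\<rfloor> = \<lfloor>((y - a) \<bullet> i) / dyadic_side l j'\<rfloor>"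
    using arg_cong[OF eq, of "\<lambda>v. v \<bullet> i"] i by (simp add: dyadic_index_inner)
  then show "dyadic_index a l j x \<bullet> i = dyadic_index a l j y \<bullet> i"
    using i by (simp add: dyadic_index_inner floor_coarser)
qed

lemma dyadic_cube_nested:
  assumes l: "0 < l" and jj: "j \<le> j'" and m: "m \<in> integer_points" and m': "m' \<in> integer_points"
    and x: "x \<in> dyadic_cube a l j m" "x \<in> dyadic_cube a l j' m'"
  shows "dyadic_cube a l j' m' \<subseteq> dyadic_cube a l j m"
proof
  fix y assume y: "y \<in> dyadic_cube a l j' m'"
  have "dyadic_index a l j' y = dyadic_index a l j' x"
    using x y mem_dyadic_cube_iff[OF l m'] by auto
  then have "dyadic_index a l j y = dyadic_index a l j x"
    by (rule dyadic_index_eq_coarser[OF l jj])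
  then show "y \<in> dyadic_cube a l j m"
    using x mem_dyadic_cube_iff[OF l m] by auto
qed

lemma hcube_side_le:
  assumes s: "0 < s" and sub: "hcube b s \<subseteq> hcube b' s'"
  shows "s \<le> s'"
proof (rule ccontr)
  assume "\<not> s \<le> s'"
  obtain i :: 'a where i: "i \<in> Basis" using nonempty_Basis by blast
  define t where "t = max 0 s'"
  have t: "0 \<le> t" "t < s" using \<open>\<not> s \<le> s'\<close> s by (auto simp: t_def)
  have "b + t *\<^sub>R i \<in> hcube b s" "b \<in> hcube b s"
    using t i s by (auto simp: hcube_def inner_add_left inner_Basis)
  then have "b + t *\<^sub>R i \<in> hcube b' s'" "b \<in> hcube b' s'" using sub by auto
  then have "b' \<bullet> i \<le> b \<bullet> i" "b \<bullet> i + t < b' \<bullet> i + s'"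
    using i by (auto simp: hcube_def inner_add_left inner_Basis)
  then show False using t by (simp add: t_def)
qed

lemma dist_le_in_hcube:
  fixes x :: "'a::euclidean_space"
  assumes "x \<in> hcube b s" "y \<in> hcube b s"
  shows "dist x y \<le> real DIM('a) * s"
proof -
  have "dist x y \<le> (\<Sum>i\<in>(Basis::'a set). \<bar>(x - y) \<bullet> i\<bar>)"
    unfolding dist_norm by (rule norm_le_l1)
  also have "\<dots> \<le> (\<Sum>i\<in>(Basis::'a set). s)"
  proof (rule sum_mono)
    fix i :: 'a assume "i \<in> Basis"
    then have "b \<bullet> i \<le> x \<bullet> i" "x \<bullet> i < b \<bullet> i + s" "b \<bullet> i \<le> y \<bullet> i" "y \<bullet> i < b \<bullet> i + s"
      using assms by (auto simp: hcube_def)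
    then show "\<bar>(x - y) \<bullet> i\<bar> \<le> s" by (simp add: inner_diff_left)
  qed
  finally show ?thesis by simp
qed

lemma dyadic_cube_subset_imp_le:
  assumes l: "0 < l" and sub: "dyadic_cube a l j m \<subseteq> dyadic_cube a l j' m'"
  shows "j' \<le> j"
  using hcube_side_le[OF dyadic_side_pos[OF l] sub[unfolded dyadic_cube_def]]
  by (simp add: dyadic_side_le_iff[OF l])

lemma diameter_hcube_le:
  fixes b :: "'a::euclidean_space"
  assumes "0 \<le> s"
  shows "diameter (hcube b s) \<le> real DIM('a) * s"
  using assms by (intro diameter_le) (auto simp: dist_norm[symmetric] intro: dist_le_in_hcube)

lemma hcube_eq_empty_iff: "hcube b s = {} \<longleftrightarrow> s \<le> 0"
proof
  assume "hcube b s = {}"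
  moreover have "b \<in> hcube b s" if "0 < s" using that by (simp add: hcube_def)
  ultimately show "s \<le> 0" by fastforce
next
  assume "s \<le> 0"
  obtain i :: 'a where "i \<in> Basis" using nonempty_Basis by blast
  then show "hcube b s = {}"
    using \<open>s \<le> 0\<close> by (fastforce simp: hcube_def)
qed

lemma bounded_hcube: "bounded (hcube b s)"
proof (rule bounded_subset[OF bounded_cbox])
  show "hcube b s \<subseteq> cbox b (b + s *\<^sub>R One)"
    by (auto simp: hcube_def mem_box inner_add_left less_imp_le)
qed

subsection \<open>Dyadic Hausdorff content\<close>

definition cover_cube :: "('a::euclidean_space \<times> real) option \<Rightarrow> 'a set" where
  "cover_cube p = (case p of None \<Rightarrow> {} | Some (b, s) \<Rightarrow> hcube b s)"

definition cover_cost :: "real \<Rightarrow> ('a \<times> real) option \<Rightarrow> ennreal" where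
  "cover_cost \<beta> p = (case p of None \<Rightarrow> 0 | Some (b, s) \<Rightarrow> ennreal (s powr \<beta>))"

definition dyadic_cover :: "'a::euclidean_space \<Rightarrow> real \<Rightarrow> 'a set \<Rightarrow> (nat \<Rightarrow> ('a \<times> real) option) \<Rightarrow> bool" where
  "dyadic_cover a l E c \<longleftrightarrow>
     (\<forall>n. c n = None \<or> the (c n) \<in> dyadic_params a l) \<and> E \<subseteq> (\<Union>n. cover_cube (c n))"

lemma dyadic_content_eq_INF_cover:
  "dyadic_content \<beta> a l E = (INF c \<in> {c. dyadic_cover a l E c}. \<Sum>n. cover_cost \<beta> (c n))"
proof -
  have "x \<in> cover_cube p \<longleftrightarrow> p \<noteq> None \<and> x \<in> hcube (fst (the p)) (snd (the p))" for x p
    by (cases p) (auto simp: cover_cube_def)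
  then have "(\<Union>n\<in>{n. c n \<noteq> None}. hcube (fst (the (c n))) (snd (the (c n)))) = (\<Union>n. cover_cube (c n))"
    for c :: "nat \<Rightarrow> ('a \<times> real) option"
    by blast
  then show ?thesis
    unfolding dyadic_content_def dyadic_cover_def cover_cost_def by simp
qed

lemma dyadic_content_le_cover:
  "dyadic_cover a l E c \<Longrightarrow> dyadic_content \<beta> a l E \<le> (\<Sum>n. cover_cost \<beta> (c n))"
  unfolding dyadic_content_eq_INF_cover by (rule INF_lower) simp

lemma dyadic_content_less_obtains_cover:
  assumes "dyadic_content \<beta> a l E < y"
  obtains c where "dyadic_cover a l E c" "(\<Sum>n. cover_cost \<beta> (c n)) < y"
  using assms unfolding dyadic_content_eq_INF_cover INF_less_iff by auto

lemma dyadic_cover_SomeE: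
  assumes "dyadic_cover a l E c" "c n = Some (b, s)"
  obtains j m where "m \<in> integer_points" "s = dyadic_side l j" "hcube b s = dyadic_cube a l j m"
proof -
  have "(b, s) \<in> dyadic_params a l"
    using assms unfolding dyadic_cover_def by (metis option.distinct(1) option.sel)
  then show thesis
    by (rule dyadic_params_cases) (use that in \<open>auto simp: dyadic_cube_def\<close>)
qed

lemma dyadic_content_mono: "A \<subseteq> B \<Longrightarrow> dyadic_content \<beta> a l A \<le> dyadic_content \<beta> a l B"
  unfolding dyadic_content_eq_INF_cover dyadic_cover_def by (intro INF_superset_mono) auto

lemma dyadic_content_empty [simp]: "dyadic_content \<beta> a l {} = 0"
proof -
  have "dyadic_cover a l {} (\<lambda>_. None)" by (simp add: dyadic_cover_def)
  from dyadic_content_le_cover[OF this, of \<beta>] show ?thesis by (simp add: cover_cost_def)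
qed

lemma dyadic_content_dyadic_cube_le:
  assumes m: "m \<in> integer_points" and A: "A \<subseteq> dyadic_cube a l j m"
  shows "dyadic_content \<beta> a l A \<le> ennreal (dyadic_side l j powr \<beta>)"
proof -
  define c where "c n = (if n = 0 then Some (a + dyadic_side l j *\<^sub>R m, dyadic_side l j) else None)"
    for n :: nat
  have "dyadic_cover a l A c"
    using A dyadic_params_dyadic_cube[OF m]
    unfolding dyadic_cover_def c_def dyadic_cube_def cover_cube_def by auto
  then have "dyadic_content \<beta> a l A \<le> (\<Sum>n. cover_cost \<beta> (c n))"
    by (rule dyadic_content_le_cover)
  also have "(\<lambda>n. cover_cost \<beta> (c n)) = (\<lambda>n. if n = 0 then ennreal (dyadic_side l j powr \<beta>) else 0)"
    by (auto simp: c_def cover_cost_def)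
  finally show ?thesis
    using sums_unique[OF sums_single[of 0 "\<lambda>_. ennreal (dyadic_side l j powr \<beta>)"]] by simp
qed

lemma dyadic_cover_UN:
  assumes "\<And>n. dyadic_cover a l (A n) (C n)"
  shows "dyadic_cover a l (\<Union>n. A n) (\<lambda>i. case_prod C (prod_decode i))"
  unfolding dyadic_cover_def
proof (intro conjI allI subsetI)
  fix i
  obtain n k where "prod_decode i = (n, k)" by (cases "prod_decode i")
  then show "case_prod C (prod_decode i) = None \<or> the (case_prod C (prod_decode i)) \<in> dyadic_params a l"
    using assms[of n] unfolding dyadic_cover_def by simp
next
  fix x assume "x \<in> (\<Union>n. A n)"
  then obtain n k where "x \<in> cover_cube (C n k)"
    using assms unfolding dyadic_cover_def by blast
  then show "x \<in> (\<Union>i. cover_cube (case_prod C (prod_decode i)))"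
    by (intro UN_I[of "prod_encode (n, k)"]) auto
qed

lemma dyadic_content_UN_le:
  "dyadic_content \<beta> a l (\<Union>n. A n) \<le> (\<Sum>n. dyadic_content \<beta> a l (A n))"
proof (rule ennreal_le_epsilon)
  fix e :: real
  assume fin: "(\<Sum>n. dyadic_content \<beta> a l (A n)) < top" and e: "0 < e"
  define eps where "eps n = e * (1/2) ^ Suc n" for n
  have "\<exists>c. dyadic_cover a l (A n) c \<and>
      (\<Sum>k. cover_cost \<beta> (c k)) < dyadic_content \<beta> a l (A n) + ennreal (eps n)" for n
  proof -
    have "dyadic_content \<beta> a l (A n) < top"
      using ennreal_suminf_lessD[OF fin] by blast
    then have "dyadic_content \<beta> a l (A n) < dyadic_content \<beta> a l (A n) + ennreal (eps n)"
      using e by (simp add: ennreal_add_left_cancel_less eps_def)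
    then show ?thesis
      by (metis dyadic_content_less_obtains_cover)
  qed
  then obtain C where cover: "\<And>n. dyadic_cover a l (A n) (C n)"
    and cost: "\<And>n. (\<Sum>k. cover_cost \<beta> (C n k)) < dyadic_content \<beta> a l (A n) + ennreal (eps n)"
    by metis
  have eps_sum: "(\<Sum>n. ennreal (eps n)) = ennreal e"
  proof -
    have "eps sums e"
      unfolding eps_def using sums_mult[OF power_half_series, of e] by simp
    then show ?thesis
      using e by (subst suminf_ennreal2) (auto simp: eps_def sums_iff)
  qed
  have "dyadic_content \<beta> a l (\<Union>n. A n) \<le> (\<Sum>i. cover_cost \<beta> (case_prod C (prod_decode i)))"
    by (rule dyadic_content_le_cover[OF dyadic_cover_UN[OF cover]])
  also have "\<dots> = (\<Sum>n. \<Sum>k. cover_cost \<beta> (C n k))"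
    by (rule suminf_ennreal_2dimen) simp
  also have "\<dots> \<le> (\<Sum>n. dyadic_content \<beta> a l (A n) + ennreal (eps n))"
    by (intro suminf_le less_imp_le cost) simp_all
  also have "\<dots> = (\<Sum>n. dyadic_content \<beta> a l (A n)) + ennreal e"
    by (simp add: suminf_add[symmetric] eps_sum)
  finally show "dyadic_content \<beta> a l (\<Union>n. A n) \<le> (\<Sum>n. dyadic_content \<beta> a l (A n)) + ennreal e" .
qed

lemma dyadic_content_countable_UN_eq_0:
  assumes I: "countable I" and zero: "\<And>i. i \<in> I \<Longrightarrow> dyadic_content \<beta> a l (A i) = 0"
  shows "dyadic_content \<beta> a l (\<Union>i\<in>I. A i) = 0"
proof (cases "I = {}")
  case False
  have "(\<Union>i\<in>I. A i) = (\<Union>n. A (from_nat_into I n))"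
    using range_from_nat_into[OF False I] by (metis image_image)
  also have "dyadic_content \<beta> a l \<dots> \<le> (\<Sum>n. dyadic_content \<beta> a l (A (from_nat_into I n)))"
    by (rule dyadic_content_UN_le)
  also have "\<dots> = 0"
    using zero from_nat_into[OF False] by simp
  finally show ?thesis by simp
qed simp

lemma dyadic_choquet_mono:
  "A \<subseteq> B \<Longrightarrow> dyadic_choquet \<beta> a l A g \<le> dyadic_choquet \<beta> a l B g"
  unfolding dyadic_choquet_def by (intro nn_integral_mono mult_left_mono dyadic_content_mono) auto

lemma dyadic_choquet_ge_content:
  assumes c: "0 < c" and S: "S \<subseteq> A" and g: "\<And>y. y \<in> S \<Longrightarrow> c < g y"
  shows "ennreal c * dyadic_content \<beta> a l S \<le> dyadic_choquet \<beta> a l A g"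
proof -
  have "ennreal c * dyadic_content \<beta> a l S
      = (\<integral>\<^sup>+ t. dyadic_content \<beta> a l S * indicator {0<..<c} t \<partial>lborel)"
    using c by (subst nn_integral_cmult_indicator) (auto simp: mult.commute)
  also have "\<dots> \<le> dyadic_choquet \<beta> a l A g"
    unfolding dyadic_choquet_def
  proof (rule nn_integral_mono)
    fix t :: real
    show "dyadic_content \<beta> a l S * indicator {0<..<c} t
       \<le> indicator {0<..} t * dyadic_content \<beta> a l {x \<in> A. t < g x}"
    proof (cases "t \<in> {0<..<c}")
      case True
      then have "S \<subseteq> {x \<in> A. t < g x}" using S g by force
      then show ?thesis using True by (simp add: dyadic_content_mono)
    qed simp
  qed
  finally show ?thesis .
qed

subsection \<open>A density theorem for the dyadic content\<close>

lemma dyadic_content_le_density_times_cost: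
  assumes l: "0 < l" and \<beta>: "0 < \<beta>"
    and density: "\<And>x j. x \<in> F \<Longrightarrow> J \<le> j \<Longrightarrow>
       dyadic_content \<beta> a l (F \<inter> dyadic_cube a l j (dyadic_index a l j x))
         \<le> ennreal \<epsilon> * ennreal (dyadic_side l j powr \<beta>)"
    and AF: "A \<subseteq> F" and cover: "dyadic_cover a l A c"
    and small: "\<And>n. cover_cost \<beta> (c n) < ennreal (dyadic_side l J powr \<beta>)"
  shows "dyadic_content \<beta> a l A \<le> ennreal \<epsilon> * (\<Sum>n. cover_cost \<beta> (c n))"
proof -
  have piece: "dyadic_content \<beta> a l (A \<inter> cover_cube (c n)) \<le> ennreal \<epsilon> * cover_cost \<beta> (c n)" for n
  proof (cases "c n")
    case (Some p)
    obtain b s where p: "p = (b, s)" by (cases p)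
    obtain j m where m: "m \<in> integer_points" and s: "s = dyadic_side l j"
      and cube: "hcube b s = dyadic_cube a l j m"
      using dyadic_cover_SomeE[OF cover Some[unfolded p]] .
    have "ennreal (s powr \<beta>) < ennreal (dyadic_side l J powr \<beta>)"
      using small[of n] Some p by (simp add: cover_cost_def)
    then have less: "s powr \<beta> < dyadic_side l J powr \<beta>"
      by (simp add: ennreal_less_iff)
    have "\<not> dyadic_side l J \<le> s"
    proof
      assume "dyadic_side l J \<le> s"
      then have "dyadic_side l J powr \<beta> \<le> s powr \<beta>"
        using \<beta> less_imp_le[OF dyadic_side_pos[OF l, of J]] by (intro powr_mono2) auto
      then show False using less by simp
    qed
    then have Jj: "J \<le> j" using dyadic_side_le_iff[OF l] s by simp
    show ?thesis
    proof (cases "A \<inter> cover_cube (c n) = {}")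
      case False
      then obtain x where x: "x \<in> F" "x \<in> dyadic_cube a l j m"
        using AF Some p cube by (auto simp: cover_cube_def)
      have "dyadic_content \<beta> a l (A \<inter> cover_cube (c n))
          \<le> dyadic_content \<beta> a l (F \<inter> dyadic_cube a l j (dyadic_index a l j x))"
        using AF x Some p cube mem_dyadic_cube_iff[OF l m]
        by (intro dyadic_content_mono) (auto simp: cover_cube_def)
      also have "\<dots> \<le> ennreal \<epsilon> * cover_cost \<beta> (c n)"
        using density[OF x(1) Jj] Some p s by (simp add: cover_cost_def)
      finally show ?thesis .
    qed simp
  qed (simp add: cover_cube_def)
  have "A \<subseteq> (\<Union>n. A \<inter> cover_cube (c n))"
    using cover unfolding dyadic_cover_def by blast
  then have "dyadic_content \<beta> a l A \<le> dyadic_content \<beta> a l (\<Union>n. A \<inter> cover_cube (c n))"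
    by (rule dyadic_content_mono)
  also have "\<dots> \<le> (\<Sum>n. dyadic_content \<beta> a l (A \<inter> cover_cube (c n)))"
    by (rule dyadic_content_UN_le)
  also have "\<dots> \<le> (\<Sum>n. ennreal \<epsilon> * cover_cost \<beta> (c n))"
    by (intro suminf_le piece) simp_all
  finally show ?thesis by simp
qed

text \<open>A cover of \<open>F \<inter> dyadic_cube a l J m\<close> that costs less than the cube itself consists of
  strictly smaller dyadic cubes, so the density bound applies to each of them and yields
  \<open>h \<le> \<epsilon> (h + e)\<close> for the content \<open>h\<close> of \<open>F \<inter> dyadic_cube a l J m\<close> and every \<open>e > 0\<close>.\<close>
lemma dyadic_content_cube_eq_0_if_density_less_1:
  assumes l: "0 < l" and \<beta>: "0 < \<beta>" and \<epsilon>: "0 \<le> \<epsilon>" "\<epsilon> < 1" and m: "m \<in> integer_points"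
    and density: "\<And>x j. x \<in> F \<Longrightarrow> J \<le> j \<Longrightarrow>
       dyadic_content \<beta> a l (F \<inter> dyadic_cube a l j (dyadic_index a l j x))
         \<le> ennreal \<epsilon> * ennreal (dyadic_side l j powr \<beta>)"
  shows "dyadic_content \<beta> a l (F \<inter> dyadic_cube a l J m) = 0"
proof (cases "F \<inter> dyadic_cube a l J m = {}")
  case False
  define S where "S = dyadic_side l J powr \<beta>"
  have S: "0 < S" using dyadic_side_pos[OF l, of J] by (simp add: S_def)
  obtain x0 where x0: "x0 \<in> F" "x0 \<in> dyadic_cube a l J m" using False by blast
  have "dyadic_content \<beta> a l (F \<inter> dyadic_cube a l J m) \<le> ennreal (\<epsilon> * S)"
    using density[OF x0(1) order_refl] x0(2) mem_dyadic_cube_iff[OF l m] \<epsilon>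
    by (simp add: S_def ennreal_mult)
  then obtain h where h: "dyadic_content \<beta> a l (F \<inter> dyadic_cube a l J m) = ennreal h"
    and h0: "0 \<le> h" and hS: "h \<le> \<epsilon> * S"
    using \<epsilon> S by (auto simp: le_ennreal_iff)
  have "h \<le> \<epsilon> * h + e" if e: "0 < e" for e
  proof -
    define y where "y = min (h + e) S"
    have "\<epsilon> * S < S" using \<epsilon> S by simp
    then have "h < y" using hS e by (simp add: y_def)
    then have "dyadic_content \<beta> a l (F \<inter> dyadic_cube a l J m) < ennreal y"
      using h h0 by (simp add: ennreal_less_iff)
    then obtain c where cover: "dyadic_cover a l (F \<inter> dyadic_cube a l J m) c"
      and cost: "(\<Sum>n. cover_cost \<beta> (c n)) < ennreal y"
      by (rule dyadic_content_less_obtains_cover)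
    have small: "\<And>n. cover_cost \<beta> (c n) < ennreal (dyadic_side l J powr \<beta>)"
      using ennreal_suminf_lessD[OF cost] by (rule order_less_le_trans) (simp add: y_def S_def)
    have "ennreal h \<le> ennreal \<epsilon> * (\<Sum>n. cover_cost \<beta> (c n))"
      unfolding h[symmetric]
      by (rule dyadic_content_le_density_times_cost[OF l \<beta> density Int_lower1 cover small])
    also have "\<dots> \<le> ennreal \<epsilon> * ennreal (h + e)"
    proof (rule mult_left_mono)
      show "(\<Sum>n. cover_cost \<beta> (c n)) \<le> ennreal (h + e)"
        using less_imp_le[OF cost] by (rule order_trans) (auto intro!: ennreal_leI simp: y_def)
    qed simp
    also have "\<dots> = ennreal (\<epsilon> * (h + e))"
      using \<epsilon> h0 e by (simp add: ennreal_mult)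
    finally have "h \<le> \<epsilon> * (h + e)"
      using \<epsilon> h0 e ennreal_le_iff[of "\<epsilon> * (h + e)" h] by simp
    moreover have "\<epsilon> * e \<le> e" using \<epsilon> e by (simp add: mult_left_le_one_le)
    ultimately show ?thesis by (simp add: distrib_left)
  qed
  then have "h \<le> \<epsilon> * h" by (rule field_le_epsilon)
  then have "(1 - \<epsilon>) * h \<le> 0" by (simp add: algebra_simps)
  then have "h = 0" using h0 \<epsilon> by (simp add: mult_le_0_iff)
  then show ?thesis using h by simp
qed simp

lemma dyadic_content_eq_0_if_density_less_1:
  assumes l: "0 < l" and \<beta>: "0 < \<beta>" and \<epsilon>: "0 \<le> \<epsilon>" "\<epsilon> < 1"
    and density: "\<And>x j. x \<in> F \<Longrightarrow> J \<le> j \<Longrightarrow>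
       dyadic_content \<beta> a l (F \<inter> dyadic_cube a l j (dyadic_index a l j x))
         \<le> ennreal \<epsilon> * ennreal (dyadic_side l j powr \<beta>)"
  shows "dyadic_content \<beta> a l F = 0"
proof -
  have "F \<subseteq> (\<Union>m\<in>integer_points. F \<inter> dyadic_cube a l J m)"
  proof
    fix x assume "x \<in> F"
    then show "x \<in> (\<Union>m\<in>integer_points. F \<inter> dyadic_cube a l J m)"
      using mem_dyadic_cube_index[OF l, of x a J] by (intro UN_I[of "dyadic_index a l J x"]) auto
  qed
  then have "dyadic_content \<beta> a l F \<le> dyadic_content \<beta> a l (\<Union>m\<in>integer_points. F \<inter> dyadic_cube a l J m)"
    by (rule dyadic_content_mono)
  also have "\<dots> = 0"
  proof (rule dyadic_content_countable_UN_eq_0[OF countable_integer_points])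
    fix m :: 'a assume "m \<in> integer_points"
    then show "dyadic_content \<beta> a l (F \<inter> dyadic_cube a l J m) = 0"
      by (rule dyadic_content_cube_eq_0_if_density_less_1[OF l \<beta> \<epsilon> _ density])
  qed
  finally show ?thesis by simp
qed

lemma dyadic_content_superlevel_eq_0:
  assumes l: "0 < l" and \<beta>: "0 < \<beta>" and lam: "0 \<le> lam"
    and averages: "\<And>x j. x \<in> E \<Longrightarrow> 0 \<le> j \<Longrightarrow>
       dyadic_choquet \<beta> a l (dyadic_cube a l j (dyadic_index a l j x)) g
         \<le> ennreal lam * ennreal (dyadic_side l j powr \<beta>)"
  shows "dyadic_content \<beta> a l {x \<in> E. lam < g x} = 0"
proof -
  define F where "F n = {x \<in> E. lam + inverse (real (Suc n)) < g x}" for n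
  have F_zero: "dyadic_content \<beta> a l (F n) = 0" for n
  proof -
    define c where "c = lam + inverse (real (Suc n))"
    have "0 < inverse (real (Suc n))" by simp
    then have c: "0 < c" "lam < c" using lam unfolding c_def by linarith+
    have density: "dyadic_content \<beta> a l (F n \<inter> dyadic_cube a l j (dyadic_index a l j x))
        \<le> ennreal (lam / c) * ennreal (dyadic_side l j powr \<beta>)" if x: "x \<in> F n" and j: "0 \<le> j" for x j
    proof -
      define R where "R = dyadic_cube a l j (dyadic_index a l j x)"
      define S where "S = dyadic_side l j powr \<beta>"
      have "dyadic_content \<beta> a l (F n \<inter> R) \<le> ennreal S"
        unfolding R_def S_def by (intro dyadic_content_dyadic_cube_le) auto
      moreover have S0: "0 \<le> S" by (simp add: S_def)
      ultimately obtain h where h: "dyadic_content \<beta> a l (F n \<inter> R) = ennreal h" and h0: "0 \<le> h"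
        by (auto simp: le_ennreal_iff)
      have "ennreal c * dyadic_content \<beta> a l (F n \<inter> R) \<le> dyadic_choquet \<beta> a l R g"
        by (rule dyadic_choquet_ge_content[OF c(1)]) (auto simp: F_def c_def)
      also have "\<dots> \<le> ennreal lam * ennreal S"
        using x j averages unfolding R_def S_def F_def by blast
      finally have "ennreal (c * h) \<le> ennreal (lam * S)"
        using h h0 c lam S0 by (simp add: ennreal_mult)
      then have "c * h \<le> lam * S"
        using lam by (simp add: S_def)
      then have "h \<le> lam / c * S"
        using c by (simp add: field_simps)
      then show ?thesis
        using h c lam by (simp add: R_def S_def ennreal_mult[symmetric])
    qed
    show ?thesis
      by (rule dyadic_content_eq_0_if_density_less_1[OF l \<beta> _ _ density]) (use lam c in auto)
  qed
  have "{x \<in> E. lam < g x} \<subseteq> (\<Union>n. F n)"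
  proof
    fix x assume x: "x \<in> {x \<in> E. lam < g x}"
    then obtain n where "inverse (real (Suc n)) < g x - lam"
      using reals_Archimedean[of "g x - lam"] by auto
    then have "x \<in> F n" using x by (simp add: F_def)
    then show "x \<in> (\<Union>n. F n)" by blast
  qed
  then have "dyadic_content \<beta> a l {x \<in> E. lam < g x} \<le> dyadic_content \<beta> a l (\<Union>n. F n)"
    by (rule dyadic_content_mono)
  also have "\<dots> \<le> (\<Sum>n. dyadic_content \<beta> a l (F n))"
    by (rule dyadic_content_UN_le)
  finally show ?thesis by (simp add: F_zero)
qed

subsection \<open>Null sets of the dyadic content\<close>

lemma cover_cube_diameter_le:
  fixes p :: "('a::euclidean_space \<times> real) option"
  assumes \<beta>: "0 < \<beta>" and \<delta>: "0 \<le> \<delta>"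
    and cost: "cover_cost \<beta> p \<le> ennreal ((\<delta> / real DIM('a)) powr \<beta>)"
  shows "diameter (cover_cube p) \<le> \<delta>"
proof (cases p)
  case (Some q)
  obtain b s where q: "q = (b, s)" by (cases q)
  show ?thesis
  proof (cases "0 < s")
    case True
    have "s powr \<beta> \<le> (\<delta> / real DIM('a)) powr \<beta>"
      using cost Some q by (simp add: cover_cost_def)
    then have "s \<le> \<delta> / real DIM('a)"
      using \<beta> \<delta> powr_less_mono2[of \<beta> "\<delta> / real DIM('a)" s] by (meson linorder_not_le divide_nonneg_nonneg of_nat_0_le_iff)
    then have "real DIM('a) * s \<le> \<delta>"
      by (simp add: field_simps)
    then show ?thesis
      using diameter_hcube_le[of s b] True Some q by (simp add: cover_cube_def)
  next
    case False
    then have "hcube b s = {}" by (simp add: hcube_eq_empty_iff)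
    then show ?thesis using Some q \<delta> by (simp add: cover_cube_def)
  qed
qed (simp add: cover_cube_def \<delta>)

lemma cover_cube_diameter_powr_le:
  fixes p :: "('a::euclidean_space \<times> real) option"
  assumes \<beta>: "0 < \<beta>"
  shows "ennreal (if cover_cube p = {} then 0 else diameter (cover_cube p) powr \<beta>)
    \<le> ennreal (real DIM('a) powr \<beta>) * cover_cost \<beta> p"
proof (cases "cover_cube p = {}")
  case False
  then obtain b s where p: "p = Some (b, s)"
    by (cases p) (auto simp: cover_cube_def)
  have s: "0 < s"
    using False p hcube_eq_empty_iff[of b s] by (simp add: cover_cube_def)
  have "diameter (hcube b s) powr \<beta> \<le> (real DIM('a) * s) powr \<beta>"
    using \<beta> s diameter_hcube_le[of s b] by (intro powr_mono2 diameter_ge_0 bounded_hcube) auto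
  also have "\<dots> = real DIM('a) powr \<beta> * s powr \<beta>"
    using s by (simp add: powr_mult)
  finally show ?thesis
    using p by (simp add: cover_cube_def cover_cost_def ennreal_mult[symmetric])
qed simp

lemma hausdorff_measure_eq_0_if_dyadic_content_eq_0:
  fixes E :: "'a::euclidean_space set"
  assumes \<beta>: "0 < \<beta>" and zero: "dyadic_content \<beta> a l E = 0"
  shows "hausdorff_measure \<beta> E = 0"
proof -
  define D where "D = real DIM('a)"
  have D: "0 < D" by (simp add: D_def)
  have bound: "(INF C \<in> {C. E \<subseteq> (\<Union>n. C n) \<and> (\<forall>n. diameter (C n) \<le> \<delta>)}.
      \<Sum>n. ennreal (if C n = {} then 0 else diameter (C n) powr \<beta>)) \<le> ennreal e"
    if \<delta>: "0 < \<delta>" and e: "0 < e" for \<delta> e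
  proof -
    define \<eta> where "\<eta> = min (e / D powr \<beta>) ((\<delta> / D) powr \<beta>)"
    have "0 < \<eta>" using e \<delta> D by (simp add: \<eta>_def)
    then have "dyadic_content \<beta> a l E < ennreal \<eta>" using zero by simp
    then obtain c where cover: "dyadic_cover a l E c" and cost: "(\<Sum>n. cover_cost \<beta> (c n)) < ennreal \<eta>"
      by (rule dyadic_content_less_obtains_cover)
    have small: "cover_cost \<beta> (c n) \<le> ennreal ((\<delta> / D) powr \<beta>)" for n
      using less_imp_le[OF ennreal_suminf_lessD[OF cost, of n]]
      by (rule order_trans) (auto intro: ennreal_leI simp: \<eta>_def)
    have diam: "diameter (cover_cube (c n)) \<le> \<delta>" for n
      by (rule cover_cube_diameter_le[OF \<beta> less_imp_le[OF \<delta>] small[unfolded D_def]])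
    have "(INF C \<in> {C. E \<subseteq> (\<Union>n. C n) \<and> (\<forall>n. diameter (C n) \<le> \<delta>)}.
        \<Sum>n. ennreal (if C n = {} then 0 else diameter (C n) powr \<beta>))
      \<le> (\<Sum>n. ennreal (if cover_cube (c n) = {} then 0 else diameter (cover_cube (c n)) powr \<beta>))"
      using cover diam by (intro INF_lower) (auto simp: dyadic_cover_def)
    also have "\<dots> \<le> (\<Sum>n. ennreal (D powr \<beta>) * cover_cost \<beta> (c n))"
      unfolding D_def by (intro suminf_le cover_cube_diameter_powr_le[OF \<beta>]) auto
    also have "\<dots> = ennreal (D powr \<beta>) * (\<Sum>n. cover_cost \<beta> (c n))"
      by simp
    also have "\<dots> \<le> ennreal (D powr \<beta>) * ennreal \<eta>"
      using cost by (intro mult_left_mono) auto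
    also have "\<dots> \<le> ennreal e"
      using D e by (simp add: ennreal_mult[symmetric] \<eta>_def field_simps min_def)
    finally show ?thesis .
  qed
  have INF_zero: "(INF C \<in> {C. E \<subseteq> (\<Union>n. C n) \<and> (\<forall>n. diameter (C n) \<le> \<delta>)}.
      \<Sum>n. ennreal (if C n = {} then 0 else diameter (C n) powr \<beta>)) = 0"
    if \<delta>: "0 < \<delta>" for \<delta>
  proof (rule antisym[OF ennreal_le_epsilon])
    fix e :: real assume "0 < e"
    then show "(INF C \<in> {C. E \<subseteq> (\<Union>n. C n) \<and> (\<forall>n. diameter (C n) \<le> \<delta>)}.
        \<Sum>n. ennreal (if C n = {} then 0 else diameter (C n) powr \<beta>)) \<le> 0 + ennreal e"
      using bound[OF \<delta>] by simp
  qed simp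
  have "hausdorff_measure \<beta> E = (SUP \<delta> \<in> {0::real<..}. 0)"
    unfolding hausdorff_measure_def by (rule SUP_cong) (simp_all add: INF_zero)
  then show ?thesis by simp
qed

subsection \<open>The stopping cubes\<close>

locale dyadic_stopping_time =
  fixes \<beta> :: real and a :: "'a::euclidean_space" and l :: real and g :: "'a \<Rightarrow> real" and lam :: real
  assumes beta_pos: "0 < \<beta>" and side_pos: "0 < l" and lam_pos: "0 < lam"
    and top_average_le: "dyadic_choquet \<beta> a l (hcube a l) g / ennreal (l powr \<beta>) \<le> ennreal lam"
begin

definition heavy :: "int \<Rightarrow> 'a \<Rightarrow> bool" where
  "heavy j m \<longleftrightarrow> m \<in> integer_points \<and> dyadic_cube a l j m \<subseteq> hcube a l \<and>
     ennreal lam * ennreal (dyadic_side l j powr \<beta>) < dyadic_choquet \<beta> a l (dyadic_cube a l j m) g"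

definition maximal_heavy :: "int \<Rightarrow> 'a \<Rightarrow> bool" where
  "maximal_heavy j m \<longleftrightarrow> heavy j m \<and>
     (\<forall>j' m'. heavy j' m' \<longrightarrow> dyadic_cube a l j m \<subseteq> dyadic_cube a l j' m' \<longrightarrow> j' = j)"

definition stopping_cubes :: "('a \<times> real) set" where
  "stopping_cubes = {(a + dyadic_side l j *\<^sub>R m, dyadic_side l j) | j m. maximal_heavy j m}"

lemma heavy_level_pos:
  assumes heavy: "heavy j m"
  shows "0 < j"
proof -
  have m: "m \<in> integer_points" and sub: "dyadic_cube a l j m \<subseteq> dyadic_cube a l 0 0"
    using heavy by (auto simp: heavy_def)
  have "0 \<le> j"
    by (rule dyadic_cube_subset_imp_le[OF side_pos sub])
  moreover have "j \<noteq> 0"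
  proof
    assume j: "j = 0"
    define x where "x = a + dyadic_side l j *\<^sub>R m"
    have "x \<in> dyadic_cube a l 0 m"
      unfolding x_def j by (rule corner_mem_dyadic_cube[OF side_pos])
    moreover from this have "x \<in> dyadic_cube a l 0 0"
      using sub j by auto
    ultimately
    have "m = 0"
      using mem_dyadic_cube_iff[OF side_pos] m by (metis zero_in_integer_points)
    then have "dyadic_choquet \<beta> a l (hcube a l) g \<le> ennreal lam * ennreal (dyadic_side l j powr \<beta>)"
      using top_average_le side_pos by (simp add: j ennreal_divide_le_iff)
    then show False
      using heavy \<open>m = 0\<close> by (simp add: heavy_def j)
  qed
  ultimately show ?thesis by simp
qed

lemma least_heavy_level:
  assumes heavy: "heavy j (dyadic_index a l j x)"
  obtains j0 where "heavy j0 (dyadic_index a l j0 x)"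
    and "\<And>j'. heavy j' (dyadic_index a l j' x) \<Longrightarrow> j0 \<le> j'"
proof -
  define N where "N = {n::nat. heavy (int n) (dyadic_index a l (int n) x)}"
  have N_iff: "nat j' \<in> N \<longleftrightarrow> heavy j' (dyadic_index a l j' x)" if "0 < j'" for j'
    using that by (simp add: N_def)
  have "nat j \<in> N"
    using heavy heavy_level_pos[OF heavy] by (simp add: N_iff)
  then have "(LEAST n. n \<in> N) \<in> N"
    by (rule LeastI)
  moreover have "int (LEAST n. n \<in> N) \<le> j'" if "heavy j' (dyadic_index a l j' x)" for j'
    using Least_le[of "\<lambda>n. n \<in> N" "nat j'"] that heavy_level_pos[OF that] N_iff by simp
  ultimately show thesis
    by (intro that[of "int (LEAST n. n \<in> N)"]) (simp_all add: N_def)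
qed

lemma heavy_subset_maximal_heavy:
  assumes heavy: "heavy j m"
  obtains j0 m0 where "maximal_heavy j0 m0" "dyadic_cube a l j m \<subseteq> dyadic_cube a l j0 m0"
proof -
  define x where "x = a + dyadic_side l j *\<^sub>R m"
  have x: "x \<in> dyadic_cube a l j m"
    unfolding x_def by (rule corner_mem_dyadic_cube[OF side_pos])
  have m: "m \<in> integer_points"
    using heavy by (simp add: heavy_def)
  have m_eq: "m = dyadic_index a l j x"
    using x mem_dyadic_cube_iff[OF side_pos m] by simp
  obtain j0 where heavy0: "heavy j0 (dyadic_index a l j0 x)"
    and least: "\<And>j'. heavy j' (dyadic_index a l j' x) \<Longrightarrow> j0 \<le> j'"
    using least_heavy_level heavy m_eq by metis
  define m0 where "m0 = dyadic_index a l j0 x"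
  have x0: "x \<in> dyadic_cube a l j0 m0"
    unfolding m0_def by (rule mem_dyadic_cube_index[OF side_pos])
  have "maximal_heavy j0 m0"
    unfolding maximal_heavy_def
  proof (intro conjI allI impI)
    show "heavy j0 m0" using heavy0 by (simp add: m0_def)
    fix j' m' assume heavy': "heavy j' m'" and sub: "dyadic_cube a l j0 m0 \<subseteq> dyadic_cube a l j' m'"
    have "m' \<in> integer_points" "x \<in> dyadic_cube a l j' m'"
      using sub x0 heavy' by (auto simp: heavy_def)
    then have "m' = dyadic_index a l j' x"
      using mem_dyadic_cube_iff[OF side_pos] by blast
    then have "j0 \<le> j'"
      using heavy' least by simp
    moreover have "j' \<le> j0"
      by (rule dyadic_cube_subset_imp_le[OF side_pos sub])
    ultimately show "j' = j0" by simp
  qed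
  moreover have "dyadic_cube a l j m \<subseteq> dyadic_cube a l j0 m0"
    using heavy x x0 least[of j] m_eq
    by (intro dyadic_cube_nested[OF side_pos]) (auto simp: m0_def)
  ultimately show thesis by (rule that)
qed

lemma maximal_heavy_unique:
  assumes max: "maximal_heavy j m" "maximal_heavy j' m'"
    and x: "x \<in> dyadic_cube a l j m" "x \<in> dyadic_cube a l j' m'"
  shows "j = j' \<and> m = m'"
proof -
  have m: "m \<in> integer_points" "m' \<in> integer_points"
    using max by (auto simp: maximal_heavy_def heavy_def)
  have "j = j'"
  proof (cases "j \<le> j'")
    case True
    then have "dyadic_cube a l j' m' \<subseteq> dyadic_cube a l j m"
      using dyadic_cube_nested[OF side_pos _ m x] by blast
    then show ?thesis using max unfolding maximal_heavy_def by metis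
  next
    case False
    then have "dyadic_cube a l j m \<subseteq> dyadic_cube a l j' m'"
      using dyadic_cube_nested[OF side_pos _ m(2) m(1) x(2) x(1)] by simp
    then show ?thesis using max unfolding maximal_heavy_def by metis
  qed
  moreover have "m = dyadic_index a l j x" "m' = dyadic_index a l j' x"
    using x mem_dyadic_cube_iff[OF side_pos] m by auto
  ultimately show ?thesis by simp
qed

text \<open>The parent of a maximal heavy cube lies in \<open>hcube a l\<close> and is not heavy.\<close>
lemma maximal_heavy_choquet_le:
  assumes max: "maximal_heavy j m"
  shows "dyadic_choquet \<beta> a l (dyadic_cube a l j m) g
    \<le> ennreal (2 powr \<beta> * lam) * ennreal (dyadic_side l j powr \<beta>)"
proof -
  have heavy: "heavy j m" using max by (simp add: maximal_heavy_def)
  then have m: "m \<in> integer_points" and sub: "dyadic_cube a l j m \<subseteq> dyadic_cube a l 0 0"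
    by (auto simp: heavy_def)
  have j: "0 < j" by (rule heavy_level_pos[OF heavy])
  define x where "x = a + dyadic_side l j *\<^sub>R m"
  have x: "x \<in> dyadic_cube a l j m"
    unfolding x_def by (rule corner_mem_dyadic_cube[OF side_pos])
  define P where "P = dyadic_cube a l (j - 1) (dyadic_index a l (j - 1) x)"
  have xP: "x \<in> P"
    unfolding P_def by (rule mem_dyadic_cube_index[OF side_pos])
  have cube_P: "dyadic_cube a l j m \<subseteq> P"
    using xP x m unfolding P_def by (intro dyadic_cube_nested[OF side_pos]) auto
  have P_sub: "P \<subseteq> hcube a l"
    using j xP x sub unfolding P_def dyadic_cube_0_0[symmetric]
    by (intro dyadic_cube_nested[OF side_pos]) auto
  have "\<not> heavy (j - 1) (dyadic_index a l (j - 1) x)"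
    using max cube_P unfolding maximal_heavy_def P_def by force
  then have "dyadic_choquet \<beta> a l P g \<le> ennreal lam * ennreal (dyadic_side l (j - 1) powr \<beta>)"
    using P_sub by (simp add: heavy_def P_def not_less)
  also have "\<dots> = ennreal (2 powr \<beta> * lam) * ennreal (dyadic_side l j powr \<beta>)"
    using lam_pos dyadic_side_pos[OF side_pos, of j]
    by (simp add: dyadic_side_diff_one powr_mult ennreal_mult[symmetric] mult_ac)
  finally show ?thesis
    using dyadic_choquet_mono[OF cube_P] by (rule order_trans[rotated])
qed

lemma choquet_le_outside_stopping_cubes:
  assumes x: "x \<in> hcube a l" "x \<notin> (\<Union>(b, s)\<in>stopping_cubes. hcube b s)" and j: "0 \<le> j"
  shows "dyadic_choquet \<beta> a l (dyadic_cube a l j (dyadic_index a l j x)) g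
    \<le> ennreal lam * ennreal (dyadic_side l j powr \<beta>)"
proof (rule ccontr)
  assume "\<not> ?thesis"
  moreover have "dyadic_cube a l j (dyadic_index a l j x) \<subseteq> hcube a l"
    using x j mem_dyadic_cube_index[OF side_pos] unfolding dyadic_cube_0_0[symmetric]
    by (intro dyadic_cube_nested[OF side_pos]) auto
  ultimately have "heavy j (dyadic_index a l j x)"
    by (simp add: heavy_def not_le)
  then obtain j0 m0 where max: "maximal_heavy j0 m0"
    and sub: "dyadic_cube a l j (dyadic_index a l j x) \<subseteq> dyadic_cube a l j0 m0"
    by (rule heavy_subset_maximal_heavy)
  have "(a + dyadic_side l j0 *\<^sub>R m0, dyadic_side l j0) \<in> stopping_cubes"
    using max by (auto simp: stopping_cubes_def)
  moreover have "x \<in> hcube (a + dyadic_side l j0 *\<^sub>R m0) (dyadic_side l j0)"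
    using sub mem_dyadic_cube_index[OF side_pos] by (auto simp: dyadic_cube_def)
  ultimately show False
    using x(2) by blast
qed

lemma countable_stopping_cubes: "countable stopping_cubes"
proof (rule countable_subset)
  show "stopping_cubes \<subseteq> (\<lambda>(j, m). (a + dyadic_side l j *\<^sub>R m, dyadic_side l j)) ` (UNIV \<times> integer_points)"
    by (auto simp: stopping_cubes_def maximal_heavy_def heavy_def)
  show "countable ((\<lambda>(j, m). (a + dyadic_side l j *\<^sub>R m, dyadic_side l j)) ` ((UNIV :: int set) \<times> integer_points))"
    by (intro countable_image countable_SIGMA countable_integer_points) auto
qed

lemma stopping_cubes_subset_dyadic_params: "stopping_cubes \<subseteq> dyadic_params a l"
  by (auto simp: stopping_cubes_def maximal_heavy_def heavy_def intro: dyadic_params_dyadic_cube)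

lemma stopping_cube_subset: "(b, s) \<in> stopping_cubes \<Longrightarrow> hcube b s \<subseteq> hcube a l"
  by (auto simp: stopping_cubes_def maximal_heavy_def heavy_def dyadic_cube_def)

lemma stopping_cubes_disjoint:
  assumes "p \<in> stopping_cubes" "q \<in> stopping_cubes" "p \<noteq> q"
  shows "hcube (fst p) (snd p) \<inter> hcube (fst q) (snd q) = {}"
proof -
  obtain j m j' m' where p: "p = (a + dyadic_side l j *\<^sub>R m, dyadic_side l j)" "maximal_heavy j m"
    and q: "q = (a + dyadic_side l j' *\<^sub>R m', dyadic_side l j')" "maximal_heavy j' m'"
    using assms(1,2) by (auto simp: stopping_cubes_def)
  show ?thesis
    using maximal_heavy_unique[OF p(2) q(2)] p(1) q(1) assms(3) by (auto simp: dyadic_cube_def)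
qed

lemma stopping_cube_averages:
  assumes "(b, s) \<in> stopping_cubes"
  shows "ennreal lam < dyadic_choquet \<beta> a l (hcube b s) g / ennreal (s powr \<beta>)"
    and "dyadic_choquet \<beta> a l (hcube b s) g / ennreal (s powr \<beta>) \<le> ennreal (2 powr \<beta> * lam)"
proof -
  obtain j m where bs: "b = a + dyadic_side l j *\<^sub>R m" "s = dyadic_side l j" and max: "maximal_heavy j m"
    using assms by (auto simp: stopping_cubes_def)
  have s: "0 < s powr \<beta>" using bs dyadic_side_pos[OF side_pos, of j] by simp
  show "ennreal lam < dyadic_choquet \<beta> a l (hcube b s) g / ennreal (s powr \<beta>)"
    using max bs s by (simp add: maximal_heavy_def heavy_def dyadic_cube_def ennreal_divide_le_iff flip: not_le)
  show "dyadic_choquet \<beta> a l (hcube b s) g / ennreal (s powr \<beta>) \<le> ennreal (2 powr \<beta> * lam)"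
    using maximal_heavy_choquet_le[OF max] bs s by (simp add: dyadic_cube_def ennreal_divide_le_iff)
qed

lemma hausdorff_measure_outside_stopping_cubes:
  "hausdorff_measure \<beta> {x \<in> hcube a l - (\<Union>(b, s)\<in>stopping_cubes. hcube b s). lam < g x} = 0"
proof (rule hausdorff_measure_eq_0_if_dyadic_content_eq_0[OF beta_pos])
  show "dyadic_content \<beta> a l {x \<in> hcube a l - (\<Union>(b, s)\<in>stopping_cubes. hcube b s). lam < g x} = 0"
    using choquet_le_outside_stopping_cubes
    by (intro dyadic_content_superlevel_eq_0[OF side_pos beta_pos less_imp_le[OF lam_pos]]) blast
qed

end

theorem theorem3p4:
  fixes \<beta> :: real and a :: "'a::euclidean_space" and l :: real
    and f :: "'a \<Rightarrow> real" and lam :: real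
  assumes "0 < \<beta>" and "\<beta> \<le> real DIM('a)"
    and "0 < l"
    and "f \<in> dyadic_L1 \<beta> a l"
    and "0 < lam"
    and "ennreal lam \<ge> dyadic_choquet \<beta> a l (hcube a l) (\<lambda>x. \<bar>f x\<bar>) / ennreal (l powr \<beta>)"
  shows "\<exists>K. countable K \<and> K \<subseteq> dyadic_params a l \<and>
     (\<forall>(b, s)\<in>K. hcube b s \<subseteq> hcube a l) \<and>
     (\<forall>p\<in>K. \<forall>q\<in>K. p \<noteq> q \<longrightarrow> hcube (fst p) (snd p) \<inter> hcube (fst q) (snd q) = {}) \<and>
     (\<forall>(b, s)\<in>K.
        ennreal lam < dyadic_choquet \<beta> a l (hcube b s) (\<lambda>x. \<bar>f x\<bar>) / ennreal (s powr \<beta>) \<and>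
        dyadic_choquet \<beta> a l (hcube b s) (\<lambda>x. \<bar>f x\<bar>) / ennreal (s powr \<beta>) \<le> ennreal (2 powr \<beta> * lam)) \<and>
     hausdorff_measure \<beta> {x \<in> hcube a l - (\<Union>(b, s)\<in>K. hcube b s). \<bar>f x\<bar> > lam} = 0"
proof -
  interpret dyadic_stopping_time \<beta> a l "\<lambda>x. \<bar>f x\<bar>" lam
    using assms by unfold_locales simp_all
  show ?thesis
    using countable_stopping_cubes stopping_cubes_subset_dyadic_params stopping_cube_subset
      stopping_cubes_disjoint stopping_cube_averages hausdorff_measure_outside_stopping_cubes
    by (intro exI[of _ stopping_cubes]) auto
qed

end
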